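(* Let $G$ be a profinite group and assume that $G=H\ltimes N$ is the semidirect product of two closed subgroups $H$ and $N$ (with $N$ normal). If $H$ is a profinite-$C$ group and every open subgroup of $N$ has a $G$-invariant permutable complement in $N$, then $G$ is a profinite-$C$ group.
   Context: A permutable complement of a subgroup $H$ of a group $G$ is a subgroup $K$ with $G=HK$ and $H\cap K=1$. A profinite group $G$ is a profinite-$C$ group if every closed subgroup of $G$ has a closed permutable complement in $G$. *)

theory Defs
  imports "HOL-Analysis.Analysis" "HOL-Algebra.Coset"
begin

definition topological_group :: "('a, 'b) monoid_scheme \<Rightarrow> 'a topology \<Rightarrow> bool" where
  "topological_group G T \<longleftrightarrow> group G \<and> topspace T = carrier G \<and>
     continuous_map (prod_topology T T) T (\<lambda>(x, y). x \<otimes>\<^bsub>G\<^esub> y) \<and>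
     continuous_map T T (\<lambda>x. inv\<^bsub>G\<^esub> x)"

definition profinite_group :: "('a, 'b) monoid_scheme \<Rightarrow> 'a topology \<Rightarrow> bool" where
  "profinite_group G T \<longleftrightarrow> topological_group G T \<and> compact_space T \<and> Hausdorff_space T \<and>
     (\<forall>x \<in> topspace T. connected_component_of_set T x = {x})"

definition permutable_complement :: "('a, 'b) monoid_scheme \<Rightarrow> 'a set \<Rightarrow> 'a set \<Rightarrow> bool" where
  "permutable_complement G H K \<longleftrightarrow> subgroup K G \<and> H <#>\<^bsub>G\<^esub> K = carrier G \<and> H \<inter> K = {\<one>\<^bsub>G\<^esub>}"

definition profinite_C :: "('a, 'b) monoid_scheme \<Rightarrow> 'a topology \<Rightarrow> bool" where
  "profinite_C G T \<longleftrightarrow> profinite_group G T \<and>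
     (\<forall>H. subgroup H G \<and> closedin T H \<longrightarrow>
        (\<exists>K. closedin T K \<and> permutable_complement G H K))"

end

theory Submission
  imports Defs "HOL-Algebra.SndIsomorphismGrp"
begin

text \<open>
  Fix a closed subgroup \<open>X\<close> of \<open>G\<close>. By Zorn's lemma, with compactness to pass to
  intersections of chains, there is a minimal closed normal subgroup \<open>M\<close> of \<open>G\<close> inside \<open>N\<close>
  with \<open>(X \<inter> N) M = N\<close>. Minimality forces \<open>X \<inter> N \<inter> M = 1\<close>: a nontrivial \<open>a\<close> in it is
  avoided by an open normal subgroup \<open>W\<close> of the profinite group \<open>G\<close>, and if \<open>L\<close> is a
  \<open>G\<close>-invariant complement in \<open>N\<close> of the open subgroup \<open>N \<inter> (X \<inter> N \<inter> M) W\<close>, then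
  \<open>M \<inter> W L\<close> is a smaller such subgroup not containing \<open>a\<close>. If now \<open>Z\<close> is a closed
  complement of \<open>H \<inter> X N\<close> in \<open>H\<close>, then \<open>Z M\<close> is a closed complement of \<open>X\<close> in \<open>G\<close>.
\<close>

section \<open>Products of subgroups\<close>

lemma in_set_mult_iff: "x \<in> A <#>\<^bsub>G\<^esub> B \<longleftrightarrow> (\<exists>a\<in>A. \<exists>b\<in>B. x = a \<otimes>\<^bsub>G\<^esub> b)"
  by (auto simp: set_mult_def)

context group
begin

lemma inv_mult_cancel [simp]: "x \<in> carrier G \<Longrightarrow> y \<in> carrier G \<Longrightarrow> inv x \<otimes> (x \<otimes> y) = y"
  by (simp add: m_assoc[symmetric])

lemma mult_inv_cancel [simp]: "x \<in> carrier G \<Longrightarrow> y \<in> carrier G \<Longrightarrow> x \<otimes> (inv x \<otimes> y) = y"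
  by (simp add: m_assoc[symmetric])

lemma subset_set_mult_right:
  assumes "A \<subseteq> carrier G" "\<one> \<in> B"
  shows "A \<subseteq> A <#> B"
proof
  fix a assume "a \<in> A"
  with assms have "a = a \<otimes> \<one>" by auto
  with \<open>a \<in> A\<close> \<open>\<one> \<in> B\<close> show "a \<in> A <#> B" unfolding in_set_mult_iff by blast
qed

lemma subset_set_mult_left:
  assumes "B \<subseteq> carrier G" "\<one> \<in> A"
  shows "B \<subseteq> A <#> B"
proof
  fix b assume "b \<in> B"
  with assms have "b = \<one> \<otimes> b" by auto
  with \<open>b \<in> B\<close> \<open>\<one> \<in> A\<close> show "b \<in> A <#> B" unfolding in_set_mult_iff by blast
qed

lemma set_mult_subgroup_absorb_left:
  assumes "subgroup A G" "subgroup B G" "A \<subseteq> B"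
  shows "A <#> B = B"
proof
  show "A <#> B \<subseteq> B"
    using mono_set_mult[OF assms(3) order_refl] subgroup_mult_id[OF assms(2)] by blast
  show "B \<subseteq> A <#> B"
    using assms by (intro subset_set_mult_left subgroup.subset subgroup.one_closed)
qed

lemma set_mult_subgroup_absorb_right:
  assumes "subgroup A G" "subgroup B G" "A \<subseteq> B"
  shows "B <#> A = B"
proof
  show "B <#> A \<subseteq> B"
    using mono_set_mult[OF order_refl assms(3)] subgroup_mult_id[OF assms(2)] by blast
  show "B \<subseteq> B <#> A"
    using assms by (intro subset_set_mult_right subgroup.subset subgroup.one_closed)
qed

lemma set_mult_commute_if_subgroup:
  assumes A: "subgroup A G" and B: "subgroup B G" and AB: "subgroup (A <#> B) G"
  shows "B <#> A = A <#> B"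
proof
  show "B <#> A \<subseteq> A <#> B"
  proof
    fix x assume "x \<in> B <#> A"
    then obtain b a where ba: "b \<in> B" "a \<in> A" "x = b \<otimes> a" by (auto simp: in_set_mult_iff)
    with A B have "inv x = inv a \<otimes> inv b"
      by (simp add: inv_mult_group subgroup.mem_carrier)
    moreover have "inv a \<in> A" "inv b \<in> B"
      using ba A B by (simp_all add: subgroup.m_inv_closed)
    ultimately have "inv x \<in> A <#> B" by (auto simp: in_set_mult_iff)
    then have "inv (inv x) \<in> A <#> B" by (rule subgroup.m_inv_closed[OF AB])
    with A B ba show "x \<in> A <#> B" by (simp add: subgroup.mem_carrier)
  qed
  show "A <#> B \<subseteq> B <#> A"
  proof
    fix x assume x: "x \<in> A <#> B"
    then have "inv x \<in> A <#> B" by (rule subgroup.m_inv_closed[OF AB])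
    then obtain a b where ab: "a \<in> A" "b \<in> B" "inv x = a \<otimes> b" by (auto simp: in_set_mult_iff)
    have "x = inv (inv x)" using x AB by (simp add: subgroup.mem_carrier)
    also have "\<dots> = inv b \<otimes> inv a" using ab A B by (simp add: inv_mult_group subgroup.mem_carrier)
    finally have "x = inv b \<otimes> inv a" .
    moreover have "inv a \<in> A" "inv b \<in> B"
      using ab A B by (simp_all add: subgroup.m_inv_closed)
    ultimately show "x \<in> B <#> A" by (auto simp: in_set_mult_iff)
  qed
qed

lemma subgroup_set_mult_normal:
  assumes "subgroup A G" and "B \<lhd> G"
  shows "subgroup (A <#> B) G"
proof -
  have "subgroup (B <#> A) G"
    using assms second_isomorphism_grp.normal_set_mult_subgroup[of B G A]
    unfolding second_isomorphism_grp_def second_isomorphism_grp_axioms_def by blast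
  with commut_normal[OF assms] show ?thesis by simp
qed

lemma modular_law:
  assumes A: "subgroup A G" and B: "subgroup B G" and "A \<subseteq> B" and C: "C \<subseteq> carrier G"
  shows "B \<inter> (A <#> C) = A <#> (B \<inter> C)"
proof
  show "B \<inter> (A <#> C) \<subseteq> A <#> (B \<inter> C)"
  proof
    fix x assume "x \<in> B \<inter> (A <#> C)"
    then obtain a c where x: "x \<in> B" and ac: "a \<in> A" "c \<in> C" "x = a \<otimes> c"
      by (auto simp: in_set_mult_iff)
    have "a \<in> carrier G" "c \<in> carrier G" using ac A C by (auto simp: subgroup.mem_carrier)
    with ac have "c = inv a \<otimes> x" by simp
    moreover have "inv a \<in> B" using ac \<open>A \<subseteq> B\<close> B by (auto simp: subgroup.m_inv_closed)
    ultimately have "c \<in> B" using x B by (simp add: subgroup.m_closed)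
    with ac show "x \<in> A <#> (B \<inter> C)" by (auto simp: in_set_mult_iff)
  qed
  show "A <#> (B \<inter> C) \<subseteq> B \<inter> (A <#> C)"
    using \<open>A \<subseteq> B\<close> subgroup.m_closed[OF B] by (force simp: in_set_mult_iff)
qed

lemma in_set_mult_iff_rcos_meets:
  assumes U: "subgroup U G" and "M \<subseteq> carrier G" "n \<in> carrier G"
  shows "n \<in> U <#> M \<longleftrightarrow> M \<inter> (U #> n) \<noteq> {}"
proof
  assume "n \<in> U <#> M"
  then obtain u m where "u \<in> U" "m \<in> M" "n = u \<otimes> m" by (auto simp: in_set_mult_iff)
  moreover have "u \<in> carrier G" "m \<in> carrier G"
    using \<open>u \<in> U\<close> \<open>m \<in> M\<close> assms(2) subgroup.mem_carrier[OF U] by auto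
  ultimately have "m = inv u \<otimes> n" "inv u \<in> U"
    by (simp_all add: subgroup.m_inv_closed[OF U])
  with \<open>m \<in> M\<close> show "M \<inter> (U #> n) \<noteq> {}" unfolding r_coset_def by blast
next
  assume "M \<inter> (U #> n) \<noteq> {}"
  then obtain u where "u \<in> U" "u \<otimes> n \<in> M" unfolding r_coset_def by blast
  moreover have "u \<in> carrier G" using \<open>u \<in> U\<close> subgroup.mem_carrier[OF U] by blast
  ultimately have "n = inv u \<otimes> (u \<otimes> n)" "inv u \<in> U"
    using \<open>n \<in> carrier G\<close> by (simp_all add: subgroup.m_inv_closed[OF U])
  with \<open>u \<otimes> n \<in> M\<close> show "n \<in> U <#> M" by (auto simp: in_set_mult_iff)
qed

lemma normal_Inter:
  assumes "\<N> \<noteq> {}" "\<And>N. N \<in> \<N> \<Longrightarrow> N \<lhd> G"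
  shows "\<Inter>\<N> \<lhd> G"
proof (rule normal_invI)
  show "subgroup (\<Inter>\<N>) G"
    by (rule subgroups_Inter) (use assms normal_imp_subgroup in auto)
  fix x h assume "x \<in> carrier G" "h \<in> \<Inter>\<N>"
  with assms(2) show "x \<otimes> h \<otimes> inv x \<in> \<Inter>\<N>" using normal_invE(2) by blast
qed

definition normal_core :: "'a set \<Rightarrow> 'a set" where
  "normal_core S = {g \<in> carrier G. \<forall>x\<in>carrier G. x \<otimes> g \<otimes> inv x \<in> S}"

lemma normal_core_subset: "normal_core S \<subseteq> S"
proof
  fix g assume "g \<in> normal_core S"
  then have g: "g \<in> carrier G" and "\<forall>x\<in>carrier G. x \<otimes> g \<otimes> inv x \<in> S"
    by (simp_all add: normal_core_def)
  then have "\<one> \<otimes> g \<otimes> inv \<one> \<in> S" using one_closed by blast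
  with g show "g \<in> S" by simp
qed

lemma normal_core_normal:
  assumes S: "subgroup S G"
  shows "normal_core S \<lhd> G"
proof -
  have conj_mult: "x \<otimes> (g \<otimes> h) \<otimes> inv x = (x \<otimes> g \<otimes> inv x) \<otimes> (x \<otimes> h \<otimes> inv x)"
    if "x \<in> carrier G" "g \<in> carrier G" "h \<in> carrier G" for x g h
    using that by (simp add: m_assoc)
  have conj_inv: "x \<otimes> inv g \<otimes> inv x = inv (x \<otimes> g \<otimes> inv x)"
    if "x \<in> carrier G" "g \<in> carrier G" for x g
    using that by (simp add: m_assoc inv_mult_group)
  have conj_conj: "x \<otimes> (y \<otimes> g \<otimes> inv y) \<otimes> inv x = (x \<otimes> y) \<otimes> g \<otimes> inv (x \<otimes> y)"
    if "x \<in> carrier G" "y \<in> carrier G" "g \<in> carrier G" for x y g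
    using that by (simp add: m_assoc inv_mult_group)
  have "subgroup (normal_core S) G"
  proof (rule subgroupI)
    show "normal_core S \<subseteq> carrier G" by (auto simp: normal_core_def)
    show "normal_core S \<noteq> {}"
      using subgroup.one_closed[OF S] by (auto simp: normal_core_def)
    fix g h assume g: "g \<in> normal_core S" and h: "h \<in> normal_core S"
    then show "inv g \<in> normal_core S"
      using conj_inv subgroup.m_inv_closed[OF S] by (auto simp: normal_core_def)
    show "g \<otimes> h \<in> normal_core S"
      using g h conj_mult subgroup.m_closed[OF S] by (auto simp: normal_core_def)
  qed
  then show ?thesis
    by (rule normal_invI) (auto simp: normal_core_def conj_conj)
qed

lemma rcos_stabilizer_subgroup:
  assumes "C \<subseteq> carrier G"
  shows "subgroup {g \<in> carrier G. C #> g = C} G"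
proof (rule subgroupI)
  show "{g \<in> carrier G. C #> g = C} \<noteq> {}"
    using assms by (auto intro!: exI[of _ \<one>])
  fix g h assume g: "g \<in> {g \<in> carrier G. C #> g = C}" and h: "h \<in> {g \<in> carrier G. C #> g = C}"
  then show "g \<otimes> h \<in> {g \<in> carrier G. C #> g = C}"
    using assms by (simp add: coset_mult_assoc[symmetric])
  then have "g \<in> carrier G" "C #> inv g = (C #> g) #> inv g" using g by auto
  with assms show "inv g \<in> {g \<in> carrier G. C #> g = C}"
    by (simp add: coset_mult_assoc)
qed auto

lemma rcos_eq_if_subsets:
  assumes "C \<subseteq> carrier G" "g \<in> carrier G" "C #> g \<subseteq> C" "C #> inv g \<subseteq> C"
  shows "C #> g = C"
proof
  show "C \<subseteq> C #> g"
  proof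
    fix c assume c: "c \<in> C"
    then have "c \<otimes> inv g \<in> C" using assms(4) unfolding r_coset_def by blast
    moreover have "c = (c \<otimes> inv g) \<otimes> g" using c assms(1,2) by (auto simp: m_assoc)
    ultimately show "c \<in> C #> g" unfolding r_coset_def by blast
  qed
qed (rule assms(3))

lemma set_mult_Int_supplement:
  assumes U: "subgroup U G" and M: "subgroup M G" and P: "P \<subseteq> carrier G"
    and UM: "U <#> M = N" and "M \<subseteq> (U \<inter> M) <#> P"
  shows "U <#> (M \<inter> P) = N"
proof -
  have U0: "subgroup (U \<inter> M) G" by (rule subgroups_Inter_pair[OF U M])
  have "M = M \<inter> ((U \<inter> M) <#> P)" using \<open>M \<subseteq> (U \<inter> M) <#> P\<close> by blast
  also have "\<dots> = (U \<inter> M) <#> (M \<inter> P)" by (rule modular_law[OF U0 M _ P]) simp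
  finally have "N = U <#> ((U \<inter> M) <#> (M \<inter> P))" using UM by simp
  also have "\<dots> = (U <#> (U \<inter> M)) <#> (M \<inter> P)"
    using subgroup.subset[OF U] P by (simp add: set_mult_assoc le_infI1 le_infI2)
  also have "\<dots> = U <#> (M \<inter> P)"
    using set_mult_subgroup_absorb_right[OF U0 U] by simp
  finally show ?thesis ..
qed

lemma mem_normal_factor_if_complement:
  assumes W: "W \<lhd> G" and L: "subgroup L G" "L \<subseteq> N" "N \<inter> (A <#> W) \<inter> L = {\<one>}"
    and A: "subgroup A G" and a: "a \<in> A" "a \<in> W <#> L"
  shows "a \<in> W"
proof -
  obtain w l where wl: "w \<in> W" "l \<in> L" "a = w \<otimes> l"
    using a(2) by (auto simp: in_set_mult_iff)
  have W_subgroup: "subgroup W G" using W normal_imp_subgroup by blast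
  have carrier: "w \<in> carrier G" "l \<in> carrier G"
    using wl subgroup.mem_carrier[OF W_subgroup] subgroup.mem_carrier[OF L(1)] by auto
  have "l = inv w \<otimes> a" using wl carrier by simp
  moreover have "inv w \<in> W" using wl(1) subgroup.m_inv_closed[OF W_subgroup] by blast
  ultimately have "l \<in> W <#> A" using a(1) by (auto simp: in_set_mult_iff)
  then have "l \<in> N \<inter> (A <#> W) \<inter> L"
    using commut_normal[OF A W] wl(2) L(2) by auto
  with L(3) have "l = \<one>" by blast
  with wl carrier show ?thesis by simp
qed

lemma Int_set_mult_complement:
  assumes X: "subgroup X G" and N: "subgroup N G" and M: "subgroup M G" "M \<subseteq> N" "X \<inter> N \<inter> M = {\<one>}"
    and Z: "subgroup Z G" "Z \<subseteq> H" "H \<inter> (X <#> N) \<inter> Z = {\<one>}"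
  shows "X \<inter> (Z <#> M) = {\<one>}"
proof
  show "X \<inter> (Z <#> M) \<subseteq> {\<one>}"
  proof
    fix x assume x: "x \<in> X \<inter> (Z <#> M)"
    then obtain z m where zm: "z \<in> Z" "m \<in> M" "x = z \<otimes> m" by (auto simp: in_set_mult_iff)
    have carrier: "z \<in> carrier G" "m \<in> carrier G"
      using zm subgroup.mem_carrier[OF Z(1)] subgroup.mem_carrier[OF M(1)] by auto
    have "z = x \<otimes> inv m" using zm carrier by (simp add: m_assoc)
    moreover have "inv m \<in> N" using zm(2) M(2) subgroup.m_inv_closed[OF N] by blast
    ultimately have "z \<in> H \<inter> (X <#> N) \<inter> Z" using x zm(1) Z(2) by (auto simp: in_set_mult_iff)
    with Z(3) have "z = \<one>" by blast
    with zm carrier have "x = m" by simp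
    with x zm(2) M(2,3) show "x \<in> {\<one>}" by blast
  qed
  show "{\<one>} \<subseteq> X \<inter> (Z <#> M)"
    using subgroup.one_closed[OF X] subgroup.one_closed[OF Z(1)] subgroup.one_closed[OF M(1)]
    by (force simp: in_set_mult_iff)
qed

lemma permutable_complement_in_subgroup_iff:
  assumes "subgroup H G"
  shows "permutable_complement (G\<lparr>carrier := H\<rparr>) A K \<longleftrightarrow>
           subgroup K G \<and> K \<subseteq> H \<and> A <#> K = H \<and> A \<inter> K = {\<one>}"
proof -
  have "subgroup K (G\<lparr>carrier := H\<rparr>) \<longleftrightarrow> subgroup K G \<and> K \<subseteq> H"
  proof
    assume K: "subgroup K (G\<lparr>carrier := H\<rparr>)"
    show "subgroup K G \<and> K \<subseteq> H"
      using incl_subgroup[OF assms K] subgroup.subset[OF K] by simp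
  next
    assume "subgroup K G \<and> K \<subseteq> H"
    then show "subgroup K (G\<lparr>carrier := H\<rparr>)" using subgroup_incl assms by blast
  qed
  then show ?thesis by (auto simp: permutable_complement_def)
qed

lemma permutable_complement_set_mult:
  assumes H: "subgroup H G" and N: "N \<lhd> G" and HN: "H <#> N = carrier G"
    and X: "subgroup X G"
    and M: "M \<lhd> G" "M \<subseteq> N" "(X \<inter> N) <#> M = N" "X \<inter> N \<inter> M = {\<one>}"
    and Z: "permutable_complement (G\<lparr>carrier := H\<rparr>) (H \<inter> (X <#> N)) Z"
  shows "permutable_complement G X (Z <#> M)"
proof -
  define U where "U = X \<inter> N"
  define Y where "Y = H \<inter> (X <#> N)"
  have Z_subgroup: "subgroup Z G" and "Z \<subseteq> H" and YZ: "Y <#> Z = H" and "Y \<inter> Z = {\<one>}"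
    using Z H by (simp_all add: permutable_complement_in_subgroup_iff Y_def)
  have N_subgroup: "subgroup N G" and M_subgroup: "subgroup M G"
    using N M(1) normal_imp_subgroup by blast+
  have U: "subgroup U G" unfolding U_def by (rule subgroups_Inter_pair[OF X N_subgroup])
  have XN: "subgroup (X <#> N) G" by (rule subgroup_set_mult_normal[OF X N])
  have Y: "subgroup Y G" unfolding Y_def by (rule subgroups_Inter_pair[OF H XN])
  have K: "subgroup (Z <#> M) G" by (rule subgroup_set_mult_normal[OF Z_subgroup M(1)])
  note carrier = subgroup.subset[OF Z_subgroup] subgroup.subset[OF X] subgroup.subset[OF N_subgroup]
    subgroup.subset[OF M_subgroup] subgroup.subset[OF U] subgroup.subset[OF Y]
  have "X \<inter> (Z <#> M) = {\<one>}"
    using Int_set_mult_complement[OF X N_subgroup M_subgroup M(2,4) Z_subgroup \<open>Z \<subseteq> H\<close>]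
      \<open>Y \<inter> Z = {\<one>}\<close> by (simp add: Y_def)
  moreover have "(Z <#> M) <#> X = carrier G"
  proof
    show "(Z <#> M) <#> X \<subseteq> carrier G" using carrier by (simp add: setmult_subset_G)
    have "carrier G = (Z <#> Y) <#> N"
      using set_mult_commute_if_subgroup[OF Y Z_subgroup] YZ H HN by (simp add: subgroup_self)
    also have "\<dots> \<subseteq> (Z <#> (X <#> N)) <#> N" by (intro mono_set_mult) (auto simp: Y_def)
    also have "\<dots> = Z <#> (X <#> N)"
      by (simp add: set_mult_assoc carrier setmult_subset_G subgroup_mult_id[OF N_subgroup])
    also have "\<dots> = Z <#> (N <#> X)" using commut_normal[OF X N] by simp
    also have "\<dots> = Z <#> ((M <#> U) <#> X)"
      using M(3) commut_normal[OF U M(1)] by (simp add: U_def)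
    also have "\<dots> = (Z <#> M) <#> (U <#> X)"
      by (simp add: set_mult_assoc carrier setmult_subset_G)
    also have "\<dots> = (Z <#> M) <#> X"
      using set_mult_subgroup_absorb_left[OF U X] by (simp add: U_def)
    finally show "carrier G \<subseteq> (Z <#> M) <#> X" .
  qed
  then have "X <#> (Z <#> M) = carrier G"
    using set_mult_commute_if_subgroup[OF K X] by (simp add: subgroup_self)
  ultimately show ?thesis using K by (simp add: permutable_complement_def)
qed

end

section \<open>Compact spaces and chains\<close>

lemma compact_Hausdorff_clopen_separation:
  assumes "compact_space X" "Hausdorff_space X"
    and components: "\<forall>x\<in>topspace X. connected_component_of_set X x = {x}"
    and "x \<in> topspace X" "y \<in> topspace X" "x \<noteq> y"
  shows "\<exists>C. closedin X C \<and> openin X C \<and> x \<in> C \<and> y \<notin> C"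
proof -
  have "quasi_component_of X x = connected_component_of X x"
    using assms by (simp add: quasi_eq_connected_component_of)
  with assms have "\<not> quasi_component_of X x y" by auto
  with assms obtain C where C: "closedin X C" "openin X C" "x \<in> C \<longleftrightarrow> y \<notin> C"
    unfolding quasi_component_of_def by auto
  show ?thesis
  proof (cases "x \<in> C")
    case True
    with C show ?thesis by blast
  next
    case False
    with C assms show ?thesis
      by (intro exI[of _ "topspace X - C"]) auto
  qed
qed

lemma compact_space_Inter_chain:
  assumes "compact_space X" and closed: "\<And>C. C \<in> \<C> \<Longrightarrow> closedin X C \<and> C \<noteq> {}"
    and chain: "\<And>C D. C \<in> \<C> \<Longrightarrow> D \<in> \<C> \<Longrightarrow> C \<subseteq> D \<or> D \<subseteq> C"
  shows "\<Inter>\<C> \<noteq> {}"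
proof (rule compact_space_fip[THEN iffD1, OF assms(1), rule_format], intro conjI allI impI ballI)
  show "closedin X C" if "C \<in> \<C>" for C
    using closed[OF that] by simp
  fix \<F> assume \<F>: "finite \<F> \<and> \<F> \<subseteq> \<C>"
  show "\<Inter>\<F> \<noteq> {}"
  proof (cases "\<F> = {}")
    case False
    have "subset.chain \<C> \<F>" using \<F> chain by (auto simp: subset_chain_def)
    with \<F> False have "\<Inter>\<F> \<in> \<F>" using Inter_in_chain by blast
    with \<F> closed show ?thesis by blast
  qed simp
qed

lemma subset_Zorn_minimal:
  assumes "\<A> \<noteq> {}" and chain: "\<And>\<C>. \<C> \<noteq> {} \<Longrightarrow> subset.chain \<A> \<C> \<Longrightarrow> \<Inter>\<C> \<in> \<A>"
  shows "\<exists>M\<in>\<A>. \<forall>X\<in>\<A>. X \<subseteq> M \<longrightarrow> X = M"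
proof -
  have "\<exists>M\<in>uminus ` \<A>. \<forall>X\<in>uminus ` \<A>. M \<subseteq> X \<longrightarrow> X = M"
  proof (rule subset_Zorn_nonempty)
    show "uminus ` \<A> \<noteq> {}" using assms(1) by simp
    fix \<C> assume "\<C> \<noteq> {}" "subset.chain (uminus ` \<A>) \<C>"
    then have "uminus ` \<C> \<noteq> {}" "subset.chain \<A> (uminus ` \<C>)"
      by (auto simp: subset_chain_def)
    then have "\<Inter>(uminus ` \<C>) \<in> \<A>" by (rule chain)
    moreover have "\<Union>\<C> = - \<Inter>(uminus ` \<C>)" by auto
    ultimately show "\<Union>\<C> \<in> uminus ` \<A>" by (intro image_eqI)
  qed
  then obtain M' where "M' \<in> uminus ` \<A>" and maximal: "\<forall>X\<in>uminus ` \<A>. M' \<subseteq> X \<longrightarrow> X = M'"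
    by blast
  then obtain M where "M \<in> \<A>" "M' = - M" by blast
  have "X = M" if "X \<in> \<A>" "X \<subseteq> M" for X
  proof -
    have "- X \<in> uminus ` \<A>" "M' \<subseteq> - X" using that \<open>M' = - M\<close> by auto
    with maximal have "- X = M'" by blast
    with \<open>M' = - M\<close> show "X = M" by simp
  qed
  with \<open>M \<in> \<A>\<close> show ?thesis by blast
qed

section \<open>Topological groups\<close>

locale topgroup = group G for G (structure) +
  fixes T :: "'a topology"
  assumes topspace_eq [simp]: "topspace T = carrier G"
    and continuous_mult: "continuous_map (prod_topology T T) T (\<lambda>(x, y). x \<otimes> y)"
    and continuous_inv: "continuous_map T T (\<lambda>x. inv x)"
begin

lemma continuous_map_mult:
  assumes "continuous_map X T f" "continuous_map X T g"
  shows "continuous_map X T (\<lambda>x. f x \<otimes> g x)"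
  using continuous_map_compose[OF continuous_map_pairedI[OF assms] continuous_mult]
  by (simp add: o_def)

lemma continuous_map_inv:
  assumes "continuous_map X T f"
  shows "continuous_map X T (\<lambda>x. inv (f x))"
  using continuous_map_compose[OF assms continuous_inv] by (simp add: o_def)

lemma openin_l_coset:
  assumes "openin T A" "g \<in> carrier G"
  shows "openin T (g <# A)"
proof -
  have translation: "continuous_map T T (\<lambda>x. inv g \<otimes> x)"
    using assms(2) by (intro continuous_map_mult continuous_map_id[unfolded id_def]) simp
  have "g <# A = {x \<in> topspace T. inv g \<otimes> x \<in> A}"
    using openin_subset[OF assms(1)] assms(2) by (force simp: l_coset_def)
  then show ?thesis
    using openin_continuous_map_preimage[OF translation assms(1)] by simp
qed

lemma openin_set_mult:
  assumes "A \<subseteq> carrier G" "openin T W"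
  shows "openin T (A <#> W)"
proof -
  have "A <#> W = (\<Union>a\<in>A. a <# W)" by (auto simp: set_mult_def l_coset_def)
  with assms show ?thesis by (auto intro!: openin_Union openin_l_coset)
qed

lemma openin_subgroupI:
  assumes S: "subgroup S G" and "openin T V" "\<one> \<in> V" "V \<subseteq> S"
  shows "openin T S"
proof -
  have "S <#> V = S"
  proof
    show "S <#> V \<subseteq> S"
      using \<open>V \<subseteq> S\<close> subgroup.m_closed[OF S] by (fastforce simp: in_set_mult_iff)
    show "S \<subseteq> S <#> V"
      using subset_set_mult_right[OF subgroup.subset[OF S] \<open>\<one> \<in> V\<close>] .
  qed
  with openin_set_mult[OF subgroup.subset[OF S] \<open>openin T V\<close>] show ?thesis by simp
qed

lemma closedin_open_subgroup:
  assumes S: "subgroup S G" and "openin T S"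
  shows "closedin T S"
proof -
  have "(carrier G - S) <#> S = carrier G - S"
  proof
    show "(carrier G - S) <#> S \<subseteq> carrier G - S"
    proof
      fix x assume "x \<in> (carrier G - S) <#> S"
      then obtain g s where g: "g \<in> carrier G" "g \<notin> S" and s: "s \<in> S" and x: "x = g \<otimes> s"
        by (auto simp: in_set_mult_iff)
      have s_carrier: "s \<in> carrier G" using subgroup.mem_carrier[OF S s] .
      with g x have g_eq: "g = x \<otimes> inv s" by (simp add: m_assoc)
      show "x \<in> carrier G - S"
      proof
        show "x \<in> carrier G" using g s_carrier x by simp
        show "x \<notin> S"
        proof
          assume "x \<in> S"
          then have "x \<otimes> inv s \<in> S" using s S by (simp add: subgroup.m_closed subgroup.m_inv_closed)
          with g_eq g(2) show False by simp
        qed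
      qed
    qed
    show "carrier G - S \<subseteq> (carrier G - S) <#> S"
      using subset_set_mult_right subgroup.one_closed[OF S] by blast
  qed
  moreover have "openin T ((carrier G - S) <#> S)"
    using openin_set_mult \<open>openin T S\<close> by blast
  ultimately show ?thesis
    using subgroup.subset[OF S] by (simp add: closedin_def)
qed

definition open_subgroups_normally_complemented :: "'a set \<Rightarrow> bool" where
  "open_subgroups_normally_complemented N \<longleftrightarrow>
     (\<forall>V. subgroup V G \<and> V \<subseteq> N \<and> openin (subtopology T N) V \<longrightarrow>
        (\<exists>L. L \<lhd> G \<and> L \<subseteq> N \<and> V <#> L = N \<and> V \<inter> L = {\<one>}))"

lemma open_subgroups_normally_complementedD:
  assumes "open_subgroups_normally_complemented N"
    and "subgroup V G" "V \<subseteq> N" "openin (subtopology T N) V"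
  shows "\<exists>L. L \<lhd> G \<and> L \<subseteq> N \<and> V <#> L = N \<and> V \<inter> L = {\<one>}"
  using assms by (simp add: open_subgroups_normally_complemented_def)

lemma open_subgroups_normally_complementedI:
  assumes N: "subgroup N G"
    and complements: "\<forall>U. subgroup U (G\<lparr>carrier := N\<rparr>) \<and> openin (subtopology T N) U \<longrightarrow>
           (\<exists>L. permutable_complement (G\<lparr>carrier := N\<rparr>) U L \<and>
                (\<forall>g \<in> carrier G. \<forall>x \<in> L. g \<otimes> x \<otimes> inv g \<in> L))"
  shows "open_subgroups_normally_complemented N"
  unfolding open_subgroups_normally_complemented_def
proof (intro allI impI)
  fix V assume V: "subgroup V G \<and> V \<subseteq> N \<and> openin (subtopology T N) V"
  with N have "subgroup V (G\<lparr>carrier := N\<rparr>) \<and> openin (subtopology T N) V"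
    using subgroup_incl by blast
  then obtain L where L: "permutable_complement (G\<lparr>carrier := N\<rparr>) V L"
      and L_invariant: "\<forall>g \<in> carrier G. \<forall>x \<in> L. g \<otimes> x \<otimes> inv g \<in> L"
    using complements[rule_format] by blast
  with N have "subgroup L G" "L \<subseteq> N" "V <#> L = N" "V \<inter> L = {\<one>}"
    by (simp_all add: permutable_complement_in_subgroup_iff)
  moreover from \<open>subgroup L G\<close> L_invariant have "L \<lhd> G"
    by (intro normal_invI) auto
  ultimately show "\<exists>L. L \<lhd> G \<and> L \<subseteq> N \<and> V <#> L = N \<and> V \<inter> L = {\<one>}" by blast
qed

end

locale compact_topgroup = topgroup +
  assumes compact: "compact_space T" and Hausdorff: "Hausdorff_space T"
begin

lemma closedin_set_mult:
  assumes "closedin T A" "closedin T B"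
  shows "closedin T (A <#> B)"
proof -
  have "compactin (prod_topology T T) (A \<times> B)"
    using assms compact by (simp add: compactin_Times closedin_compact_space)
  then have "compactin T ((\<lambda>(x, y). x \<otimes> y) ` (A \<times> B))"
    using image_compactin continuous_mult by blast
  moreover have "(\<lambda>(x, y). x \<otimes> y) ` (A \<times> B) = A <#> B"
    by (auto simp: set_mult_def)
  ultimately show ?thesis
    using Hausdorff compactin_imp_closedin by fastforce
qed

lemma closedin_r_coset:
  assumes "closedin T A" "g \<in> carrier G"
  shows "closedin T (A #> g)"
proof -
  have "closedin T {g}"
    using assms(2) Hausdorff by (simp add: Hausdorff_imp_t1_space closedin_t1_singleton)
  with assms(1) show ?thesis by (simp add: r_coset_eq_set_mult closedin_set_mult)
qed

text \<open>The tube lemma, applied to the compact set \<open>C \<times> G\<close>, makes the neighbourhood uniform in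
  the element of \<open>C\<close> and in the conjugating element.\<close>
lemma nhd_one_conj_stabilizing:
  assumes "closedin T C" "openin T C"
  shows "\<exists>V. openin T V \<and> \<one> \<in> V \<and> (\<forall>v\<in>V. \<forall>x\<in>carrier G. C #> (x \<otimes> v \<otimes> inv x) \<subseteq> C)"
proof -
  define P where "P = prod_topology T (prod_topology T T)"
  define f where "f = (\<lambda>p. fst (snd p) \<otimes> (snd (snd p) \<otimes> fst p \<otimes> inv (snd (snd p))))"
  have "continuous_map P (prod_topology T T) snd"
    unfolding P_def by (rule continuous_map_snd)
  then have "continuous_map P T (\<lambda>p. fst (snd p))" "continuous_map P T (\<lambda>p. snd (snd p))"
    using continuous_map_fst_of continuous_map_snd_of by (auto simp: o_def)
  moreover have "continuous_map P T fst"
    unfolding P_def by (rule continuous_map_fst)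
  ultimately have "continuous_map P T f"
    unfolding f_def by (intro continuous_map_mult continuous_map_inv)
  then have open_preimage: "openin P {p \<in> topspace P. f p \<in> C}"
    using openin_continuous_map_preimage assms(2) by blast
  have compact_tube: "compactin (prod_topology T T) (C \<times> carrier G)"
    using assms(1) compact by (simp add: compactin_Times closedin_compact_space compact_space_def)
  have "{\<one>} \<times> (C \<times> carrier G) \<subseteq> {p \<in> topspace P. f p \<in> C}"
    using closedin_subset[OF assms(1)] by (auto simp: P_def f_def)
  then obtain V W where "openin T V" "\<one> \<in> V" "C \<times> carrier G \<subseteq> W"
      and "V \<times> W \<subseteq> {p \<in> topspace P. f p \<in> C}"
    using tube_lemma_right[OF open_preimage[unfolded P_def] compact_tube, where x=\<one>]
    by (auto simp: P_def)
  have "C #> (x \<otimes> v \<otimes> inv x) \<subseteq> C" if "v \<in> V" "x \<in> carrier G" for v x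
  proof
    fix y assume "y \<in> C #> (x \<otimes> v \<otimes> inv x)"
    then obtain c where "c \<in> C" "y = c \<otimes> (x \<otimes> v \<otimes> inv x)" by (auto simp: r_coset_def)
    moreover have "(v, c, x) \<in> V \<times> W"
      using that \<open>c \<in> C\<close> \<open>C \<times> carrier G \<subseteq> W\<close> by blast
    ultimately show "y \<in> C"
      using \<open>V \<times> W \<subseteq> {p \<in> topspace P. f p \<in> C}\<close> by (auto simp: f_def)
  qed
  with \<open>openin T V\<close> \<open>\<one> \<in> V\<close> show ?thesis by blast
qed

lemma openin_normal_core_rcos_stabilizer:
  assumes C: "closedin T C" "openin T C"
  shows "openin T (normal_core {g \<in> carrier G. C #> g = C})"
proof -
  have C_carrier: "C \<subseteq> carrier G" using closedin_subset[OF C(1)] by simp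
  obtain V where V: "openin T V" "\<one> \<in> V"
    and "\<forall>v\<in>V. \<forall>x\<in>carrier G. C #> (x \<otimes> v \<otimes> inv x) \<subseteq> C"
    using nhd_one_conj_stabilizing[OF C] by blast
  then have V_conj: "\<And>v x. v \<in> V \<Longrightarrow> x \<in> carrier G \<Longrightarrow> C #> (x \<otimes> v \<otimes> inv x) \<subseteq> C"
    by blast
  have S: "subgroup {g \<in> carrier G. C #> g = C} G" using rcos_stabilizer_subgroup[OF C_carrier] .
  define V' where "V' = V \<inter> {v \<in> topspace T. inv v \<in> V}"
  have "openin T V'"
    unfolding V'_def using V(1) by (intro openin_Int openin_continuous_map_preimage[OF continuous_inv])
  moreover have "\<one> \<in> V'" using V(2) by (simp add: V'_def)
  moreover have "V' \<subseteq> normal_core {g \<in> carrier G. C #> g = C}" (is "_ \<subseteq> ?W")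
  proof
    fix v assume "v \<in> V'"
    then have v: "v \<in> carrier G" "v \<in> V" "inv v \<in> V" by (auto simp: V'_def)
    have "C #> (x \<otimes> v \<otimes> inv x) = C" if x: "x \<in> carrier G" for x
    proof (rule rcos_eq_if_subsets[OF C_carrier _ V_conj[OF v(2) x]])
      have "inv (x \<otimes> v \<otimes> inv x) = x \<otimes> inv v \<otimes> inv x"
        using x v(1) by (simp add: inv_mult_group m_assoc)
      then show "C #> inv (x \<otimes> v \<otimes> inv x) \<subseteq> C" using V_conj[OF v(3) x] by simp
    qed (use x v(1) in simp)
    with v(1) show "v \<in> ?W" by (simp add: normal_core_def)
  qed
  ultimately show ?thesis
    using openin_subgroupI[OF normal_imp_subgroup[OF normal_core_normal[OF S]]] by blast
qed

lemma set_mult_Inter_chain: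
  assumes U: "subgroup U G" "closedin T U" and "\<C> \<noteq> {}"
    and supplements: "\<And>M. M \<in> \<C> \<Longrightarrow> closedin T M \<and> U <#> M = N"
    and chain: "\<And>M M'. M \<in> \<C> \<Longrightarrow> M' \<in> \<C> \<Longrightarrow> M \<subseteq> M' \<or> M' \<subseteq> M"
  shows "U <#> \<Inter>\<C> = N"
proof
  obtain M0 where M0: "M0 \<in> \<C>" using \<open>\<C> \<noteq> {}\<close> by blast
  have carrier: "M \<subseteq> carrier G" if "M \<in> \<C>" for M
    using closedin_subset[of T M] supplements[OF that] by simp
  have "U <#> \<Inter>\<C> \<subseteq> U <#> M0" using M0 by (intro mono_set_mult) auto
  then show "U <#> \<Inter>\<C> \<subseteq> N" using supplements[OF M0] by simp
  show "N \<subseteq> U <#> \<Inter>\<C>"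
  proof
    fix n assume "n \<in> N"
    have "N \<subseteq> carrier G"
      using supplements[OF M0] setmult_subset_G[OF subgroup.subset[OF U(1)] carrier[OF M0]] by simp
    with \<open>n \<in> N\<close> have n: "n \<in> carrier G" by blast
    have meets: "M \<inter> (U #> n) \<noteq> {}" if "M \<in> \<C>" for M
      using in_set_mult_iff_rcos_meets[OF U(1) carrier[OF that] n] \<open>n \<in> N\<close> supplements[OF that]
      by simp
    have "\<Inter>((\<lambda>M. M \<inter> (U #> n)) ` \<C>) \<noteq> {}"
    proof (rule compact_space_Inter_chain[OF compact])
      fix C assume "C \<in> (\<lambda>M. M \<inter> (U #> n)) ` \<C>"
      then obtain M where M: "M \<in> \<C>" and C: "C = M \<inter> (U #> n)" by blast
      have "closedin T C"
        unfolding C using supplements[OF M] closedin_r_coset[OF U(2) n] by (intro closedin_Int) auto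
      with meets[OF M] C show "closedin T C \<and> C \<noteq> {}" by simp
    next
      fix C D assume "C \<in> (\<lambda>M. M \<inter> (U #> n)) ` \<C>" "D \<in> (\<lambda>M. M \<inter> (U #> n)) ` \<C>"
      then show "C \<subseteq> D \<or> D \<subseteq> C" using chain by blast
    qed
    then obtain m where "m \<in> \<Inter>((\<lambda>M. M \<inter> (U #> n)) ` \<C>)" by blast
    with M0 have "m \<in> \<Inter>\<C> \<inter> (U #> n)" by blast
    then have "\<Inter>\<C> \<inter> (U #> n) \<noteq> {}" by blast
    moreover have "\<Inter>\<C> \<subseteq> carrier G" using carrier[OF M0] M0 by blast
    ultimately show "n \<in> U <#> \<Inter>\<C>"
      using in_set_mult_iff_rcos_meets[OF U(1) _ n] by blast
  qed
qed

end

section \<open>Profinite groups\<close>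

locale profinite_topgroup = compact_topgroup +
  assumes components_trivial: "\<forall>x\<in>topspace T. connected_component_of_set T x = {x}"

lemma profinite_topgroup_iff: "profinite_topgroup G T \<longleftrightarrow> profinite_group G T"
  by (auto simp: profinite_topgroup_def profinite_topgroup_axioms_def compact_topgroup_def
      compact_topgroup_axioms_def topgroup_def topgroup_axioms_def profinite_group_def
      topological_group_def)

context profinite_topgroup
begin

lemma open_normal_subgroup_avoiding:
  assumes a: "a \<in> carrier G" "a \<noteq> \<one>"
  shows "\<exists>W. W \<lhd> G \<and> openin T W \<and> a \<notin> W"
proof -
  obtain C where C: "closedin T C" "openin T C" "\<one> \<in> C" "a \<notin> C"
    using compact_Hausdorff_clopen_separation[OF compact Hausdorff components_trivial, of \<one> a] a
    by auto
  define W where "W = normal_core {g \<in> carrier G. C #> g = C}"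
  have "W \<lhd> G"
    unfolding W_def using closedin_subset[OF C(1)]
    by (intro normal_core_normal rcos_stabilizer_subgroup) simp
  moreover have "openin T W" unfolding W_def using openin_normal_core_rcos_stabilizer[OF C(1,2)] .
  moreover have "a \<notin> W"
  proof
    assume "a \<in> W"
    then have "C #> a = C" using normal_core_subset by (auto simp: W_def)
    moreover have "\<one> \<otimes> a \<in> C #> a" using C(3) unfolding r_coset_def by blast
    ultimately show False using a(1) C(4) by simp
  qed
  ultimately show ?thesis by blast
qed

lemma closed_normal_supplement_avoiding:
  assumes N: "subgroup N G" "open_subgroups_normally_complemented N"
    and M: "closedin T M" "M \<lhd> G" "M \<subseteq> N"
    and U: "subgroup U G" "U <#> M = N"
    and a: "a \<in> U \<inter> M" "a \<noteq> \<one>"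
  shows "\<exists>M'. closedin T M' \<and> M' \<lhd> G \<and> M' \<subseteq> M \<and> U <#> M' = N \<and> a \<notin> M'"
proof -
  have M_subgroup: "subgroup M G" using M(2) normal_imp_subgroup by blast
  have U0: "subgroup (U \<inter> M) G" by (rule subgroups_Inter_pair[OF U(1) M_subgroup])
  obtain W where W: "W \<lhd> G" "openin T W" "a \<notin> W"
    using open_normal_subgroup_avoiding a subgroup.mem_carrier[OF U(1)] by blast
  have W_subgroup: "subgroup W G" using W(1) normal_imp_subgroup by blast
  define V where "V = N \<inter> ((U \<inter> M) <#> W)"
  have "subgroup V G"
    unfolding V_def by (rule subgroups_Inter_pair[OF N(1) subgroup_set_mult_normal[OF U0 W(1)]])
  moreover have "openin (subtopology T N) V"
    unfolding V_def using openin_set_mult[OF subgroup.subset[OF U0] W(2)]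
    by (rule openin_subtopology_Int2)
  ultimately obtain L where L: "L \<lhd> G" "L \<subseteq> N" "V <#> L = N" "V \<inter> L = {\<one>}"
    using open_subgroups_normally_complementedD[OF N(2)] by (metis V_def inf_le1)
  have L_subgroup: "subgroup L G" using L(1) normal_imp_subgroup by blast
  define P where "P = W <#> L"
  have P: "P \<lhd> G" unfolding P_def using normal_subgroup_set_mult_closed[OF W(1) L(1)] .
  have "W \<subseteq> P"
    unfolding P_def using subset_set_mult_right subgroup.subset[OF W_subgroup]
      subgroup.one_closed[OF L_subgroup] by blast
  then have "openin T P"
    using openin_subgroupI[OF normal_imp_subgroup[OF P] W(2)] subgroup.one_closed[OF W_subgroup] by blast
  then have "closedin T (M \<inter> P)"
    using closedin_open_subgroup normal_imp_subgroup[OF P] M(1) by blast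
  moreover have "M \<inter> P \<lhd> G" using normal_subgroup_intersect[OF M(2) P] .
  moreover have "U <#> (M \<inter> P) = N"
  proof (rule set_mult_Int_supplement[OF U(1) M_subgroup _ U(2)])
    show "P \<subseteq> carrier G" using subgroup.subset[OF normal_imp_subgroup[OF P]] .
    have "M \<subseteq> V <#> L" using M(3) L(3) by simp
    also have "\<dots> \<subseteq> ((U \<inter> M) <#> W) <#> L" unfolding V_def by (intro mono_set_mult) auto
    also have "\<dots> = (U \<inter> M) <#> P"
      unfolding P_def
      by (simp add: set_mult_assoc subgroup.subset[OF U0] subgroup.subset[OF W_subgroup]
          subgroup.subset[OF L_subgroup])
    finally show "M \<subseteq> (U \<inter> M) <#> P" .
  qed
  moreover have "a \<notin> P"
    using mem_normal_factor_if_complement[OF W(1) L_subgroup L(2) _ U0, of a] L(4) a(1) W(3)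
    by (auto simp: P_def V_def)
  ultimately show ?thesis by blast
qed

lemma closed_normal_complement:
  assumes N: "N \<lhd> G" "closedin T N" "open_subgroups_normally_complemented N"
    and U: "subgroup U G" "closedin T U" "U \<subseteq> N"
  shows "\<exists>M. closedin T M \<and> M \<lhd> G \<and> M \<subseteq> N \<and> U <#> M = N \<and> U \<inter> M = {\<one>}"
proof -
  define \<A> where "\<A> = {M. closedin T M \<and> M \<lhd> G \<and> M \<subseteq> N \<and> U <#> M = N}"
  have N_subgroup: "subgroup N G" using N(1) normal_imp_subgroup by blast
  have "N \<in> \<A>"
    using N set_mult_subgroup_absorb_left[OF U(1) N_subgroup U(3)] by (simp add: \<A>_def)
  moreover have "\<Inter>\<C> \<in> \<A>" if "\<C> \<noteq> {}" "subset.chain \<A> \<C>" for \<C>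
  proof -
    have members: "closedin T M \<and> M \<lhd> G \<and> M \<subseteq> N \<and> U <#> M = N" if "M \<in> \<C>" for M
      using \<open>subset.chain \<A> \<C>\<close> that by (auto simp: subset_chain_def \<A>_def)
    have "closedin T (\<Inter>\<C>)" using members \<open>\<C> \<noteq> {}\<close> by (intro closedin_Inter) auto
    moreover have "\<Inter>\<C> \<lhd> G" using members \<open>\<C> \<noteq> {}\<close> by (intro normal_Inter) auto
    moreover have "\<Inter>\<C> \<subseteq> N" using members \<open>\<C> \<noteq> {}\<close> by blast
    moreover have "U <#> \<Inter>\<C> = N"
      using members \<open>subset.chain \<A> \<C>\<close>
      by (intro set_mult_Inter_chain[OF U(1,2) \<open>\<C> \<noteq> {}\<close>]) (auto simp: subset_chain_def)
    ultimately show ?thesis by (simp add: \<A>_def)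
  qed
  ultimately obtain M where "M \<in> \<A>" and minimal: "\<forall>M'\<in>\<A>. M' \<subseteq> M \<longrightarrow> M' = M"
    using subset_Zorn_minimal[of \<A>] by blast
  then have M: "closedin T M" "M \<lhd> G" "M \<subseteq> N" "U <#> M = N" by (simp_all add: \<A>_def)
  have "a = \<one>" if a: "a \<in> U \<inter> M" for a
  proof (rule ccontr)
    assume "a \<noteq> \<one>"
    then obtain M' where "closedin T M'" "M' \<lhd> G" "M' \<subseteq> M" "U <#> M' = N" "a \<notin> M'"
      using closed_normal_supplement_avoiding[OF N_subgroup N(3) M(1-3) U(1) M(4) a] by blast
    with minimal M(3) have "M' = M" by (auto simp: \<A>_def)
    with a \<open>a \<notin> M'\<close> show False by blast
  qed
  moreover have "\<one> \<in> U \<inter> M"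
    using subgroup.one_closed U(1) normal_imp_subgroup[OF M(2)] by blast
  ultimately have "U \<inter> M = {\<one>}" by blast
  with M show ?thesis by blast
qed

lemma profinite_C_if_supplemented:
  assumes H: "subgroup H G" "closedin T H" "profinite_C (G\<lparr>carrier := H\<rparr>) (subtopology T H)"
    and N: "N \<lhd> G" "closedin T N" "open_subgroups_normally_complemented N"
    and HN: "H <#> N = carrier G"
  shows "profinite_C G T"
proof -
  have "\<exists>K. closedin T K \<and> permutable_complement G X K" if X: "subgroup X G" "closedin T X" for X
  proof -
    have "subgroup (X \<inter> N) G" using subgroups_Inter_pair[OF X(1)] N(1) normal_imp_subgroup by blast
    then obtain M where M: "closedin T M" "M \<lhd> G" "M \<subseteq> N" "(X \<inter> N) <#> M = N" "X \<inter> N \<inter> M = {\<one>}"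
      using closed_normal_complement[OF N] X(2) N(2) by (meson closedin_Int inf_le2)
    define Y where "Y = H \<inter> (X <#> N)"
    have "subgroup Y G"
      unfolding Y_def by (rule subgroups_Inter_pair[OF H(1) subgroup_set_mult_normal[OF X(1) N(1)]])
    then have "subgroup Y (G\<lparr>carrier := H\<rparr>)" using subgroup_incl[OF _ H(1)] by (simp add: Y_def)
    moreover have "closedin (subtopology T H) Y"
      unfolding Y_def using closedin_set_mult[OF X(2) N(2)] by (rule closedin_subtopology_Int_closed)
    ultimately obtain Z where Z: "closedin (subtopology T H) Z" "permutable_complement (G\<lparr>carrier := H\<rparr>) Y Z"
      using H(3) by (auto simp: profinite_C_def)
    have "closedin T (Z <#> M)"
      using closedin_set_mult[OF closedin_trans_full[OF Z(1) H(2)] M(1)] .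
    moreover have "permutable_complement G X (Z <#> M)"
      using permutable_complement_set_mult[OF H(1) N(1) HN X(1) M(2-5)] Z(2) by (simp add: Y_def)
    ultimately show ?thesis by blast
  qed
  moreover have "profinite_group G T"
    using profinite_topgroup_axioms by (simp add: profinite_topgroup_iff)
  ultimately show ?thesis by (simp add: profinite_C_def)
qed

end

theorem lemma2p11:
  fixes G :: "('a, 'b) monoid_scheme" and T :: "'a topology" and H N :: "'a set"
  assumes "profinite_group G T"
    and "subgroup H G" and "closedin T H"
    and "subgroup N G" and "closedin T N" and "normal N G"
    and "H <#>\<^bsub>G\<^esub> N = carrier G" and "H \<inter> N = {\<one>\<^bsub>G\<^esub>}"
    and "profinite_C (G\<lparr>carrier := H\<rparr>) (subtopology T H)"
    and "\<forall>U. subgroup U (G\<lparr>carrier := N\<rparr>) \<and> openin (subtopology T N) U \<longrightarrow>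
           (\<exists>L. permutable_complement (G\<lparr>carrier := N\<rparr>) U L \<and>
                (\<forall>g \<in> carrier G. \<forall>x \<in> L. g \<otimes>\<^bsub>G\<^esub> x \<otimes>\<^bsub>G\<^esub> inv\<^bsub>G\<^esub> g \<in> L))"
  shows "profinite_C G T"
proof -
  interpret profinite_topgroup G T
    using assms(1) by (simp add: profinite_topgroup_iff)
  show ?thesis
    using profinite_C_if_supplemented[OF assms(2,3,9,6,5) _ assms(7)]
      open_subgroups_normally_complementedI[OF assms(4,10)]
    by blast
qed

end
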